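(* Let $n>1$ be odd and let $A\in\mathcal S^{(n-1)\times n}$ be distinguished. The following are equivalent: (1) there exists a homogeneous degree-one $x\in\mathbb Z_2[x_1,\dots,x_{n-1}]$ with $x^2+\mathfrak w^A_2\in\operatorname{span}\{\theta^A_1,\dots,\theta^A_n\}$; (2) $\sigma_2\in\operatorname{span}\{\theta^A_1-x_1^2,\dots,\theta^A_{n-1}-x_{n-1}^2,\theta^A_n\}$, where $\sigma_2=\sum_{1\le k<l\le n-1}x_kx_l$ is the elementary symmetric polynomial of degree 2; (3) there exists $S\in\mathcal P_n$ such that for every $U\in\mathcal P_{n-1}$ (i.e. $U\subseteq\{1,\dots,n-1\}$), $|(J_A(U)+U)\cap S|_2=\binom{|U|}{2}\bmod 2$.
   Context: $\mathcal S=\{0,1,2,3\}$ is the Klein four-group ($\mathbb Z_2$-vector space) with $x+x=0$, $1+2=3$, $1+3=2$, $2+3=1$. A $k\times n$ matrix ($k\le n$) over $\mathcal S$ is distinguished if $A_{ii}=1$ and $A_{ij}\in\{2,3\}$ for $i\ne j$. $\mathcal P_m$ is the power set of $\{1,\dots,m\}$ with $+$ the symmetric difference; $|U|_2=|U|\bmod2$. $J_A(U)=\{j:\sum_{i\in U}A_{ij}=1\}$. Let $\alpha,\beta:\mathcal S\to\mathbb Z_2$ be linear with $\alpha(2)=\beta(3)=1$, $\alpha(3)=\beta(2)=0$; $\alpha_j=\sum_{k=1}^{n-1}\alpha(A_{kj})x_k$, $\beta_j=\sum_{k}\beta(A_{kj})x_k$, $\theta^A_j=\alpha_j\beta_j$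 in $\mathbb Z_2[x_1,\dots,x_{n-1}]$; $\mathfrak w^A=\prod_{j=1}^n(1+\alpha_j+\beta_j)$ and $\mathfrak w^A_2$ is its degree-2 homogeneous part. *)

theory Defs
  imports Main "HOL-Library.Poly_Mapping" "HOL-Library.Z2"
begin

text \<open>Multivariate polynomials over Z2 in variables x_1, x_2, ...: monomials are
  finitely supported exponent vectors nat =>0 nat, polynomials are finitely supported
  coefficient functions from monomials to bit.\<close>
type_synonym z2poly = "(nat \<Rightarrow>\<^sub>0 nat) \<Rightarrow>\<^sub>0 bit"

definition Var :: "nat \<Rightarrow> z2poly" where
  "Var k = Poly_Mapping.single (Poly_Mapping.single k 1) 1"

definition Const :: "bit \<Rightarrow> z2poly" where
  "Const c = Poly_Mapping.single 0 c"

definition mdeg :: "(nat \<Rightarrow>\<^sub>0 nat) \<Rightarrow> nat" where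
  "mdeg m = (\<Sum>k\<in>Poly_Mapping.keys m. Poly_Mapping.lookup m k)"

definition hpart :: "nat \<Rightarrow> z2poly \<Rightarrow> z2poly" where
  "hpart d p = Abs_poly_mapping (\<lambda>m. if mdeg m = d then Poly_Mapping.lookup p m else 0)"

definition pspan :: "nat \<Rightarrow> (nat \<Rightarrow> z2poly) \<Rightarrow> z2poly set" where
  "pspan N f = {\<Sum>j=1..N. Const (c j) * f j | c. True}"

text \<open>Klein four-group S = {0,1,2,3}, addition = bitwise xor.\<close>
definition ksum :: "(nat \<Rightarrow> nat) \<Rightarrow> nat set \<Rightarrow> nat" where
  "ksum g U = Finite_Set.fold (\<lambda>i a. xor (g i) a) 0 U"

text \<open>Matrix A with k rows and n columns, 1-based indices.\<close>
definition distinguished :: "nat \<Rightarrow> nat \<Rightarrow> (nat \<Rightarrow> nat \<Rightarrow> nat) \<Rightarrow> bool" where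
  "distinguished k n A \<longleftrightarrow> k \<le> n \<and>
     (\<forall>i\<in>{1..k}. \<forall>j\<in>{1..n}. (if i = j then A i j = 1 else A i j \<in> {2,3}))"

definition JA :: "(nat \<Rightarrow> nat \<Rightarrow> nat) \<Rightarrow> nat \<Rightarrow> nat set \<Rightarrow> nat set" where
  "JA A n U = {j\<in>{1..n}. ksum (\<lambda>i. A i j) U = 1}"

text \<open>linear maps alpha, beta : S -> Z2 with alpha 2 = beta 3 = 1, alpha 3 = beta 2 = 0
  (hence alpha 1 = beta 1 = 1, alpha 0 = beta 0 = 0).\<close>
definition alphaS :: "nat \<Rightarrow> bit" where
  "alphaS s = (if s = 1 \<or> s = 2 then 1 else 0)"
definition betaS :: "nat \<Rightarrow> bit" where
  "betaS s = (if s = 1 \<or> s = 3 then 1 else 0)"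

definition alphaA :: "(nat \<Rightarrow> nat \<Rightarrow> nat) \<Rightarrow> nat \<Rightarrow> nat \<Rightarrow> z2poly" where
  "alphaA A n j = (\<Sum>k=1..n-1. Const (alphaS (A k j)) * Var k)"
definition betaA :: "(nat \<Rightarrow> nat \<Rightarrow> nat) \<Rightarrow> nat \<Rightarrow> nat \<Rightarrow> z2poly" where
  "betaA A n j = (\<Sum>k=1..n-1. Const (betaS (A k j)) * Var k)"

definition thetaA :: "(nat \<Rightarrow> nat \<Rightarrow> nat) \<Rightarrow> nat \<Rightarrow> nat \<Rightarrow> z2poly" where
  "thetaA A n j = alphaA A n j * betaA A n j"

definition wA :: "(nat \<Rightarrow> nat \<Rightarrow> nat) \<Rightarrow> nat \<Rightarrow> z2poly" where
  "wA A n = (\<Prod>j=1..n. 1 + alphaA A n j + betaA A n j)"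

definition sigma2 :: "nat \<Rightarrow> z2poly" where
  "sigma2 m = (\<Sum>(k,l)\<in>{(k,l). 1 \<le> k \<and> k < l \<and> l \<le> m}. Var k * Var l)"

end

theory Submission
  imports Defs
begin

text \<open>
  All polynomials involved are quadratic forms over Z2 in x_1, ..., x_{n-1}, and such a form is
  determined by its values at indicator vectors of subsets U (singletons and pairs suffice).
  The forms theta_j and theta_j - x_j^2 share their off-diagonal part, and for odd n the
  off-diagonal part of w_2 consists of ones, like that of sigma_2. As the squares of linear
  forms are exactly the diagonal forms, (1) and (2) both say that some combination of the
  theta_j has all off-diagonal coefficients equal to 1. For (2) <-> (3) evaluate at U:
  sigma_2 gives binomial(|U|, 2), and theta_j - x_j^2 gives [j in J_A(U) + U], because alpha
  and beta are additive on the Klein group and alpha * beta is the indicator of 1.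
\<close>

declare add_bit_eq_xor [simp del] mult_bit_eq_and [simp del]

lemma bit_mult_self [simp]: "x * x = (x::bit)"
  by (cases x) simp_all

lemma bit_mult_of_bool: "c * of_bool P = (of_bool (c = 1 \<and> P) :: bit)"
  by (cases c) simp_all

lemma of_nat_bit: "(of_nat x :: bit) = of_bool (odd x)"
  by (induction x) auto

lemma of_nat_bit_eq_iff: "(of_nat x :: bit) = of_nat y \<longleftrightarrow> x mod 2 = y mod 2"
  by (simp add: of_nat_bit) presburger

lemma of_bool_add_of_bool_bit: "of_bool P + of_bool Q = (of_bool (P \<noteq> Q) :: bit)"
  by auto

lemma ex_bit_vector_iff_ex_subset:
  "(\<exists>c :: 'a \<Rightarrow> bit. P {j\<in>I. c j = 1}) \<longleftrightarrow> (\<exists>S\<subseteq>I. P S)"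
proof
  assume "\<exists>c :: 'a \<Rightarrow> bit. P {j\<in>I. c j = 1}"
  then obtain c :: "'a \<Rightarrow> bit" where "P {j\<in>I. c j = 1}" ..
  moreover have "{j\<in>I. c j = 1} \<subseteq> I"
    by blast
  ultimately show "\<exists>S\<subseteq>I. P S"
    by blast
next
  assume "\<exists>S\<subseteq>I. P S"
  then obtain S where "S \<subseteq> I" and "P S"
    by blast
  moreover have "{j\<in>I. (of_bool (j \<in> S) :: bit) = 1} = S"
    using \<open>S \<subseteq> I\<close> by auto
  ultimately show "\<exists>c :: 'a \<Rightarrow> bit. P {j\<in>I. c j = 1}"
    by metis
qed

lemma Const_0 [simp]: "Const 0 = 0"
  by (simp add: Const_def)

lemma Const_1 [simp]: "Const 1 = 1"
  by (simp add: Const_def)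

lemma Const_add: "Const (a + b) = Const a + Const b"
  by (simp add: Const_def single_add)

lemma Const_mult: "Const (a * b) = Const a * Const b"
  by (simp add: Const_def mult_single)

lemma lookup_Const_mult: "Poly_Mapping.lookup (Const c * p) m = c * Poly_Mapping.lookup p m"
proof -
  have "Const c * p = Poly_Mapping.map ((*) c) p"
    by (simp add: Const_def mult_map_scale_conv_mult)
  then show ?thesis
    by (simp add: Poly_Mapping.map.rep_eq when_def)
qed

lemma Const_mult_Var: "Const c * Var k = Poly_Mapping.single (Poly_Mapping.single k 1) c"
  by (simp add: Const_def Var_def mult_single)

definition deg2_monomial :: "nat \<Rightarrow> nat \<Rightarrow> nat \<Rightarrow>\<^sub>0 nat" where
  "deg2_monomial k l = Poly_Mapping.single k 1 + Poly_Mapping.single l 1"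

lemma Var_mult_Var: "Var k * Var l = Poly_Mapping.single (deg2_monomial k l) 1"
  by (simp add: Var_def deg2_monomial_def mult_single)

lemma lookup_deg2_monomial:
  "Poly_Mapping.lookup (deg2_monomial k l) i = (if i = k then 1 else 0) + (if i = l then 1 else 0)"
  by (simp add: deg2_monomial_def Poly_Mapping.lookup_add lookup_single when_def)

lemma deg2_monomial_eq_iff:
  assumes "k \<le> l" and "k' \<le> l'"
  shows "deg2_monomial k l = deg2_monomial k' l' \<longleftrightarrow> k = k' \<and> l = l'"
proof
  assume eq: "deg2_monomial k l = deg2_monomial k' l'"
  have lookup_eq: "Poly_Mapping.lookup (deg2_monomial k l) i = Poly_Mapping.lookup (deg2_monomial k' l') i" for i
    using eq by simp
  have at_k: "(if k = k' then 1 else 0) + (if k = l' then 1 else 0) = (1::nat) + (if k = l then 1 else 0)"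
    using lookup_eq[of k] by (simp add: lookup_deg2_monomial)
  have at_l: "(if l = k' then 1 else 0) + (if l = l' then 1 else 0) = (if l = k then 1 else 0) + (1::nat)"
    using lookup_eq[of l] by (simp add: lookup_deg2_monomial)
  show "k = k' \<and> l = l'"
    using at_k at_l assms by (cases "k = k'"; cases "l = l'") (auto split: if_splits)
qed simp

section \<open>Homogeneous parts\<close>

lemma mdeg_eq_sum:
  "finite K \<Longrightarrow> Poly_Mapping.keys m \<subseteq> K \<Longrightarrow> mdeg m = (\<Sum>k\<in>K. Poly_Mapping.lookup m k)"
  unfolding mdeg_def by (rule sum.mono_neutral_left) (auto simp: in_keys_iff)

lemma mdeg_add: "mdeg (a + b) = mdeg a + mdeg b"
proof -
  let ?K = "Poly_Mapping.keys a \<union> Poly_Mapping.keys b"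
  have "mdeg (a + b) = (\<Sum>k\<in>?K. Poly_Mapping.lookup (a + b) k)"
    by (rule mdeg_eq_sum) (simp_all add: keys_add)
  also have "\<dots> = (\<Sum>k\<in>?K. Poly_Mapping.lookup a k) + (\<Sum>k\<in>?K. Poly_Mapping.lookup b k)"
    by (simp add: Poly_Mapping.lookup_add sum.distrib)
  also have "\<dots> = mdeg a + mdeg b"
    by (simp add: mdeg_eq_sum[of ?K a] mdeg_eq_sum[of ?K b])
  finally show ?thesis .
qed

lemma mdeg_0 [simp]: "mdeg 0 = 0"
  by (simp add: mdeg_def)

lemma mdeg_single [simp]: "mdeg (Poly_Mapping.single k d) = d"
  by (simp add: mdeg_def)

lemma lookup_hpart:
  "Poly_Mapping.lookup (hpart d p) m = (if mdeg m = d then Poly_Mapping.lookup p m else 0)"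
proof -
  have "finite {m. (if mdeg m = d then Poly_Mapping.lookup p m else 0) \<noteq> 0}"
    by (rule finite_subset[of _ "Poly_Mapping.keys p"]) (auto simp: in_keys_iff)
  then show ?thesis
    by (simp add: hpart_def)
qed

lemma hpart_add: "hpart d (p + q) = hpart d p + hpart d q"
  by (rule poly_mapping_eqI) (simp add: lookup_hpart Poly_Mapping.lookup_add)

lemma hpart_sum: "hpart d (sum f K) = (\<Sum>x\<in>K. hpart d (f x))"
  by (rule poly_mapping_eqI) (simp add: lookup_hpart lookup_sum)

lemma hpart_single:
  "hpart d (Poly_Mapping.single m c) = (if mdeg m = d then Poly_Mapping.single m c else 0)"
  by (rule poly_mapping_eqI) (auto simp: lookup_hpart lookup_single when_def)

lemma poly_mapping_sum_single:
  "p = (\<Sum>m\<in>Poly_Mapping.keys p. Poly_Mapping.single m (Poly_Mapping.lookup p m))"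
  by (rule poly_mapping_eqI) (simp add: lookup_sum lookup_single when_def in_keys_iff)

lemma hpart_mult_single:
  "hpart d (p * Poly_Mapping.single t c) =
     (if mdeg t \<le> d then hpart (d - mdeg t) p * Poly_Mapping.single t c else 0)"
proof -
  let ?K = "Poly_Mapping.keys p"
  let ?term = "\<lambda>m. Poly_Mapping.single (m + t) (Poly_Mapping.lookup p m * c)"
  have "p * Poly_Mapping.single t c = (\<Sum>m\<in>?K. ?term m)"
    by (subst poly_mapping_sum_single) (simp add: sum_distrib_right mult_single)
  then have lhs: "hpart d (p * Poly_Mapping.single t c) = (\<Sum>m\<in>?K. if mdeg m + mdeg t = d then ?term m else 0)"
    by (simp add: hpart_sum hpart_single mdeg_add)
  have expand: "hpart e p = (\<Sum>m\<in>?K. hpart e (Poly_Mapping.single m (Poly_Mapping.lookup p m)))" for e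
    by (rule trans[OF arg_cong[where f = "hpart e", OF poly_mapping_sum_single] hpart_sum])
  have rhs: "hpart (d - mdeg t) p * Poly_Mapping.single t c = (\<Sum>m\<in>?K. if mdeg m = d - mdeg t then ?term m else 0)"
    unfolding expand[of "d - mdeg t"] sum_distrib_right by (intro sum.cong) (auto simp: hpart_single mult_single)
  show ?thesis
  proof (cases "mdeg t \<le> d")
    case True
    show ?thesis
      unfolding lhs rhs if_P[OF True] by (rule sum.cong) (use True in auto)
  next
    case False
    then show ?thesis
      unfolding lhs by simp
  qed
qed

section \<open>Quadratic forms and their values on subsets\<close>

definition lform :: "nat \<Rightarrow> (nat \<Rightarrow> bit) \<Rightarrow> z2poly" where
  "lform m c = (\<Sum>k=1..m. Const (c k) * Var k)"

definition pairs :: "nat set \<Rightarrow> (nat \<times> nat) set" where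
  "pairs I = {(k, l). k \<in> I \<and> l \<in> I \<and> k < l}"

definition qform :: "nat \<Rightarrow> (nat \<Rightarrow> bit) \<Rightarrow> (nat \<Rightarrow> nat \<Rightarrow> bit) \<Rightarrow> z2poly" where
  "qform m s f = (\<Sum>k=1..m. Const (s k) * (Var k * Var k))
     + (\<Sum>(k, l)\<in>pairs {1..m}. Const (f k l) * (Var k * Var l))"

lemma mem_pairs [simp]: "(k, l) \<in> pairs I \<longleftrightarrow> k \<in> I \<and> l \<in> I \<and> k < l"
  by (simp add: pairs_def)

lemma pairs_singleton [simp]: "pairs {k} = {}"
  by (auto simp: pairs_def)

lemma pairs_doubleton: "k < l \<Longrightarrow> pairs {k, l} = {(k, l)}"
  by (auto simp: pairs_def)

lemma pairs_eq_Sigma: "pairs I = Sigma I (\<lambda>k. {l\<in>I. k < l})"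
  by (auto simp: pairs_def)

lemma finite_pairs [simp]: "finite I \<Longrightarrow> finite (pairs I)"
  unfolding pairs_eq_Sigma by auto

lemma sum_sum_eq_diag_plus_pairs:
  fixes g :: "nat \<Rightarrow> nat \<Rightarrow> 'a::comm_monoid_add"
  assumes "finite I"
  shows "(\<Sum>k\<in>I. \<Sum>l\<in>I. g k l) = (\<Sum>k\<in>I. g k k) + (\<Sum>(k, l)\<in>pairs I. g k l + g l k)"
proof -
  have row: "(\<Sum>l\<in>I. g k l) = g k k + (\<Sum>l\<in>{l\<in>I. k < l}. g k l) + (\<Sum>l\<in>{l\<in>I. l < k}. g k l)"
    if "k \<in> I" for k
  proof -
    have "(\<Sum>l\<in>I. g k l) = (\<Sum>l\<in>I. (if l = k then g k l else 0) + (if k < l then g k l else 0)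
        + (if l < k then g k l else 0))"
      by (rule sum.cong) auto
    also have "\<dots> = g k k + (\<Sum>l\<in>{l\<in>I. k < l}. g k l) + (\<Sum>l\<in>{l\<in>I. l < k}. g k l)"
      using assms that by (simp add: sum.distrib sum.inter_filter)
    finally show ?thesis .
  qed
  have "(\<Sum>k\<in>I. \<Sum>l\<in>I. g k l) = (\<Sum>k\<in>I. g k k) + (\<Sum>k\<in>I. \<Sum>l\<in>{l\<in>I. k < l}. g k l)
      + (\<Sum>k\<in>I. \<Sum>l\<in>{l\<in>I. l < k}. g k l)"
    by (simp add: row sum.distrib)
  also have "(\<Sum>k\<in>I. \<Sum>l\<in>{l\<in>I. l < k}. g k l) = (\<Sum>l\<in>I. \<Sum>k\<in>{k\<in>I. l < k}. g k l)"
    by (rule sum.swap_restrict[OF assms assms])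
  also have "(\<Sum>k\<in>I. g k k) + (\<Sum>k\<in>I. \<Sum>l\<in>{l\<in>I. k < l}. g k l) + (\<Sum>l\<in>I. \<Sum>k\<in>{k\<in>I. l < k}. g k l)
     = (\<Sum>k\<in>I. g k k) + (\<Sum>k\<in>I. \<Sum>l\<in>{l\<in>I. k < l}. g k l + g l k)"
    by (simp add: sum.distrib add.assoc)
  also have "(\<Sum>k\<in>I. \<Sum>l\<in>{l\<in>I. k < l}. g k l + g l k) = (\<Sum>(k, l)\<in>pairs I. g k l + g l k)"
    unfolding pairs_eq_Sigma using assms by (subst sum.Sigma) auto
  finally show ?thesis .
qed

lemma card_pairs: "finite U \<Longrightarrow> card (pairs U) = card U choose 2"
proof -
  assume "finite U"
  then have "(\<Sum>k\<in>U. \<Sum>l\<in>U. (1::nat)) = (\<Sum>k\<in>U. 1) + (\<Sum>(k, l)\<in>pairs U. 1 + 1)"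
    by (rule sum_sum_eq_diag_plus_pairs)
  then have "2 * card (pairs U) = card U * (card U - 1)"
    by (simp add: split_def algebra_simps diff_mult_distrib2)
  then show ?thesis
    by (simp add: choose_two)
qed

lemma lform_add: "lform m a + lform m b = lform m (\<lambda>k. a k + b k)"
  by (simp add: lform_def sum.distrib[symmetric] Const_add distrib_right)

lemma lform_zero [simp]: "lform m (\<lambda>k. 0) = 0"
  by (simp add: lform_def)

lemma hpart_Suc_mult_lform: "hpart (Suc d) (p * lform m c) = hpart d p * lform m c"
  by (simp add: lform_def sum_distrib_left hpart_sum Const_mult_Var hpart_mult_single)

lemma hpart_0_mult_lform: "hpart 0 (p * lform m c) = 0"
  by (simp add: lform_def sum_distrib_left hpart_sum Const_mult_Var hpart_mult_single)

lemma qform_cong: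
  "(\<And>k. k \<in> {1..m} \<Longrightarrow> s k = s' k) \<Longrightarrow> (\<And>k l. (k, l) \<in> pairs {1..m} \<Longrightarrow> f k l = f' k l)
   \<Longrightarrow> qform m s f = qform m s' f'"
  unfolding qform_def by (intro arg_cong2[where f = "(+)"] sum.cong) auto

lemma qform_add: "qform m s f + qform m s' f' = qform m (\<lambda>k. s k + s' k) (\<lambda>k l. f k l + f' k l)"
proof -
  have "(\<Sum>k=1..m. Const (s k) * (Var k * Var k)) + (\<Sum>k=1..m. Const (s' k) * (Var k * Var k))
      = (\<Sum>k=1..m. Const (s k + s' k) * (Var k * Var k))"
    by (simp add: sum.distrib[symmetric] Const_add distrib_right)
  moreover have "(\<Sum>(k, l)\<in>pairs {1..m}. Const (f k l) * (Var k * Var l))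
      + (\<Sum>(k, l)\<in>pairs {1..m}. Const (f' k l) * (Var k * Var l))
      = (\<Sum>(k, l)\<in>pairs {1..m}. Const (f k l + f' k l) * (Var k * Var l))"
    by (simp add: sum.distrib[symmetric] Const_add distrib_right split_def)
  ultimately show ?thesis
    unfolding qform_def by (simp add: algebra_simps)
qed

lemma qform_zero [simp]: "qform m (\<lambda>k. 0) (\<lambda>k l. 0) = 0"
  by (simp add: qform_def)

lemma Const_mult_qform: "Const c * qform m s f = qform m (\<lambda>k. c * s k) (\<lambda>k l. c * f k l)"
  by (simp add: qform_def distrib_left sum_distrib_left Const_mult split_def mult.assoc)

lemma sum_qform:
  "finite J \<Longrightarrow> (\<Sum>j\<in>J. qform m (s j) (f j)) = qform m (\<lambda>k. \<Sum>j\<in>J. s j k) (\<lambda>k l. \<Sum>j\<in>J. f j k l)"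
  by (induction J rule: finite_induct) (simp_all add: qform_add)

lemma lform_mult_lform: "lform m a * lform m b = qform m (\<lambda>k. a k * b k) (\<lambda>k l. a k * b l + a l * b k)"
proof -
  let ?g = "\<lambda>k l. Const (a k * b l) * (Var k * Var l)"
  have "lform m a * lform m b = (\<Sum>k\<in>{1..m}. \<Sum>l\<in>{1..m}. ?g k l)"
    unfolding lform_def sum_product by (intro sum.cong refl) (simp add: Const_mult mult_ac)
  also have "\<dots> = (\<Sum>k\<in>{1..m}. ?g k k) + (\<Sum>(k, l)\<in>pairs {1..m}. ?g k l + ?g l k)"
    by (rule sum_sum_eq_diag_plus_pairs) simp
  also have "(\<Sum>(k, l)\<in>pairs {1..m}. ?g k l + ?g l k)
      = (\<Sum>(k, l)\<in>pairs {1..m}. Const (a k * b l + a l * b k) * (Var k * Var l))"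
    by (intro sum.cong refl) (clarsimp simp only: Const_add distrib_right mult.commute[of "Var l" "Var k" for k l])
  finally show ?thesis
    unfolding qform_def by simp
qed

lemma lform_square: "lform m a ^ 2 = qform m a (\<lambda>k l. 0)"
  unfolding power2_eq_square lform_mult_lform by (rule qform_cong) (simp_all add: mult.commute)

lemma lform_unit_vector:
  assumes "k \<in> {1..m}"
  shows "lform m (\<lambda>i. of_bool (i = k)) = Var k"
proof -
  have "lform m (\<lambda>i. of_bool (i = k)) = (\<Sum>i\<in>{1..m}. if i = k then Var i else 0)"
    unfolding lform_def by (rule sum.cong) auto
  also have "\<dots> = Var k"
    using assms by simp
  finally show ?thesis .
qed

text \<open>The value of the degree-2 part of p at the indicator vector of U.\<close>
definition qval :: "z2poly \<Rightarrow> nat set \<Rightarrow> bit" where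
  "qval p U = (\<Sum>k\<in>U. Poly_Mapping.lookup p (deg2_monomial k k))
     + (\<Sum>(k, l)\<in>pairs U. Poly_Mapping.lookup p (deg2_monomial k l))"

lemma qval_add: "qval (p + q) U = qval p U + qval q U"
  by (simp add: qval_def Poly_Mapping.lookup_add sum.distrib split_def algebra_simps)

lemma qval_Const_mult: "qval (Const c * p) U = c * qval p U"
  by (simp add: qval_def lookup_Const_mult sum_distrib_left split_def distrib_left)

lemma qval_zero [simp]: "qval 0 U = 0"
  by (simp add: qval_def)

lemma qval_sum: "finite J \<Longrightarrow> qval (\<Sum>j\<in>J. f j) U = (\<Sum>j\<in>J. qval (f j) U)"
  by (induction J rule: finite_induct) (simp_all add: qval_add)

lemma qval_Var_square: "finite U \<Longrightarrow> qval (Var k * Var k) U = of_bool (k \<in> U)"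
proof -
  assume "finite U"
  have "(\<Sum>i\<in>U. Poly_Mapping.lookup (Var k * Var k) (deg2_monomial i i)) = (\<Sum>i\<in>U. of_bool (i = k))"
    by (rule sum.cong) (auto simp: Var_mult_Var lookup_single when_def deg2_monomial_eq_iff)
  moreover have "(\<Sum>(i, j)\<in>pairs U. Poly_Mapping.lookup (Var k * Var k) (deg2_monomial i j)) = 0"
    by (rule sum.neutral) (auto simp: Var_mult_Var lookup_single when_def deg2_monomial_eq_iff)
  ultimately show ?thesis
    using \<open>finite U\<close> by (simp add: qval_def)
qed

lemma qval_Var_mult_Var:
  assumes "finite U" and "k < l"
  shows "qval (Var k * Var l) U = of_bool (k \<in> U \<and> l \<in> U)"
proof -
  have "(\<Sum>i\<in>U. Poly_Mapping.lookup (Var k * Var l) (deg2_monomial i i)) = 0"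
    by (rule sum.neutral) (use assms in \<open>auto simp: Var_mult_Var lookup_single when_def deg2_monomial_eq_iff\<close>)
  moreover have "(\<Sum>(i, j)\<in>pairs U. Poly_Mapping.lookup (Var k * Var l) (deg2_monomial i j))
      = (\<Sum>x\<in>pairs U. of_bool (x = (k, l)))"
    by (rule sum.cong) (use assms in \<open>auto simp: Var_mult_Var lookup_single when_def
        deg2_monomial_eq_iff split: if_split_asm\<close>)
  ultimately show ?thesis
    using assms by (simp add: qval_def)
qed

lemma qval_qform:
  assumes U: "U \<subseteq> {1..m}"
  shows "qval (qform m s f) U = (\<Sum>k\<in>U. s k) + (\<Sum>(k, l)\<in>pairs U. f k l)"
proof -
  have fin: "finite U"
    using U finite_subset by blast
  have "qval (\<Sum>k=1..m. Const (s k) * (Var k * Var k)) U = (\<Sum>k\<in>{1..m}. s k * of_bool (k \<in> U))"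
    by (simp add: qval_sum qval_Const_mult qval_Var_square fin)
  also have "\<dots> = (\<Sum>k\<in>U. s k)"
    using U by (simp add: sum_mult_of_bool_eq Int_absorb1 Int_def[symmetric] Collect_mem_eq)
  finally have diag: "qval (\<Sum>k=1..m. Const (s k) * (Var k * Var k)) U = (\<Sum>k\<in>U. s k)" .
  have "qval (\<Sum>(k, l)\<in>pairs {1..m}. Const (f k l) * (Var k * Var l)) U
      = (\<Sum>x\<in>pairs {1..m}. qval ((\<lambda>(k, l). Const (f k l) * (Var k * Var l)) x) U)"
    by (rule qval_sum) simp
  also have "\<dots> = (\<Sum>x\<in>pairs {1..m}. f (fst x) (snd x) * of_bool (x \<in> pairs U))"
    by (rule sum.cong) (auto simp: qval_Const_mult qval_Var_mult_Var fin)
  also have "\<dots> = (\<Sum>x\<in>pairs {1..m} \<inter> {x. x \<in> pairs U}. f (fst x) (snd x))"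
    by (rule sum_mult_of_bool_eq) simp
  also have "pairs {1..m} \<inter> {x. x \<in> pairs U} = pairs U"
    using U by (auto simp: pairs_def)
  finally have off_diag: "qval (\<Sum>(k, l)\<in>pairs {1..m}. Const (f k l) * (Var k * Var l)) U
      = (\<Sum>(k, l)\<in>pairs U. f k l)"
    by (simp add: split_def)
  show ?thesis
    unfolding qform_def qval_add diag off_diag ..
qed

lemma qval_lform_mult_lform:
  assumes U: "U \<subseteq> {1..m}"
  shows "qval (lform m a * lform m b) U = (\<Sum>k\<in>U. a k) * (\<Sum>k\<in>U. b k)"
proof -
  have "finite U"
    using U finite_subset by blast
  then have "(\<Sum>k\<in>U. a k) * (\<Sum>k\<in>U. b k)
      = (\<Sum>k\<in>U. a k * b k) + (\<Sum>(k, l)\<in>pairs U. a k * b l + a l * b k)"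
    unfolding sum_product by (rule sum_sum_eq_diag_plus_pairs)
  then show ?thesis
    by (simp add: lform_mult_lform qval_qform[OF U])
qed

lemma qform_coeffs_eq_if_qval_eq:
  assumes "\<And>U. U \<subseteq> {1..m} \<Longrightarrow> qval (qform m s f) U = qval (qform m s' f') U"
  shows "(\<forall>k\<in>{1..m}. s k = s' k) \<and> (\<forall>(k, l)\<in>pairs {1..m}. f k l = f' k l)"
proof -
  have diag: "s k = s' k" if "k \<in> {1..m}" for k
    using that assms[of "{k}"] by (simp add: qval_qform)
  have "f k l = f' k l" if kl: "(k, l) \<in> pairs {1..m}" for k l
  proof -
    have "{k, l} \<subseteq> {1..m}"
      using kl by auto
    then show ?thesis
      using kl diag assms[of "{k, l}"] by (simp add: qval_qform pairs_doubleton)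
  qed
  with diag show ?thesis
    by auto
qed

lemma qform_eq_iff:
  "qform m s f = qform m s' f' \<longleftrightarrow> (\<forall>k\<in>{1..m}. s k = s' k) \<and> (\<forall>(k, l)\<in>pairs {1..m}. f k l = f' k l)"
proof
  assume "qform m s f = qform m s' f'"
  then show "(\<forall>k\<in>{1..m}. s k = s' k) \<and> (\<forall>(k, l)\<in>pairs {1..m}. f k l = f' k l)"
    by (intro qform_coeffs_eq_if_qval_eq) simp
qed (rule qform_cong; blast)

lemma qform_eq_iff_qval:
  "qform m s f = qform m s' f' \<longleftrightarrow> (\<forall>U\<subseteq>{1..m}. qval (qform m s f) U = qval (qform m s' f') U)"
  using qform_coeffs_eq_if_qval_eq[of m s f s' f'] qform_eq_iff[of m s f s' f'] by auto

lemma Var_power2_qform: "k \<in> {1..m} \<Longrightarrow> Var k ^ 2 = qform m (\<lambda>i. of_bool (i = k)) (\<lambda>i j. 0)"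
  using lform_square[of m "\<lambda>i. of_bool (i = k)"] by (simp add: lform_unit_vector)

lemma sigma2_qform: "sigma2 m = qform m (\<lambda>k. 0) (\<lambda>k l. 1)"
proof -
  have "{(k, l). 1 \<le> k \<and> k < l \<and> l \<le> m} = pairs {1..m}"
    by (auto simp: pairs_def)
  then show ?thesis
    by (simp add: sigma2_def qform_def)
qed

lemma qval_sigma2: "U \<subseteq> {1..m} \<Longrightarrow> qval (sigma2 m) U = of_nat (card U choose 2)"
proof -
  assume U: "U \<subseteq> {1..m}"
  then have "qval (sigma2 m) U = of_nat (card (pairs U))"
    by (simp add: sigma2_qform qval_qform split_def)
  with U show ?thesis
    by (simp add: card_pairs finite_subset)
qed

lemma hpart_prod_one_plus_lform:
  fixes v :: "nat \<Rightarrow> nat \<Rightarrow> bit"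
  shows "hpart 0 (\<Prod>j=1..t. 1 + lform m (v j)) = 1
    \<and> hpart 1 (\<Prod>j=1..t. 1 + lform m (v j)) = lform m (\<lambda>k. \<Sum>j=1..t. v j k)
    \<and> (\<exists>s. hpart 2 (\<Prod>j=1..t. 1 + lform m (v j)) =
      qform m s (\<lambda>k l. (\<Sum>j=1..t. v j k) * (\<Sum>j=1..t. v j l) + (\<Sum>j=1..t. v j k * v j l)))"
proof (induction t)
  case 0
  have "hpart d (1::z2poly) = (if d = 0 then 1 else 0)" for d
    using hpart_single[of d 0 "1::bit"] by simp
  then show ?case
    by (auto intro: exI[of _ "\<lambda>k. 0"])
next
  case (Suc t)
  let ?P = "\<Prod>j=1..t. 1 + lform m (v j)"
  let ?v = "lform m (v (Suc t))"
  let ?s = "\<lambda>k. \<Sum>j=1..t. v j k"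
  from Suc.IH obtain s where IH0: "hpart 0 ?P = 1" and IH1: "hpart 1 ?P = lform m ?s"
    and IH2: "hpart 2 ?P = qform m s (\<lambda>k l. ?s k * ?s l + (\<Sum>j=1..t. v j k * v j l))"
    by blast
  have step: "hpart d (\<Prod>j=1..Suc t. 1 + lform m (v j)) = hpart d ?P + hpart d (?P * ?v)" for d
    by (simp add: distrib_left hpart_add)
  have mult1: "hpart 1 (?P * ?v) = ?v" and mult2: "hpart 2 (?P * ?v) = lform m ?s * ?v"
    using hpart_Suc_mult_lform[of 0 ?P] hpart_Suc_mult_lform[of 1 ?P] IH0 IH1
    by (simp_all add: numeral_2_eq_2)
  have expand: "(a + b) * (c + d) + (e + b * d) = (a * c + e) + (a * d + c * b)" for a b c d e :: bit
    by (cases a; cases b; cases c; cases d; cases e) simp_all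
  have "hpart 2 (\<Prod>j=1..Suc t. 1 + lform m (v j)) = qform m (\<lambda>k. s k + ?s k * v (Suc t) k)
      (\<lambda>k l. (\<Sum>j=1..Suc t. v j k) * (\<Sum>j=1..Suc t. v j l) + (\<Sum>j=1..Suc t. v j k * v j l))"
    unfolding step IH2 mult2 lform_mult_lform qform_add by (rule qform_cong) (simp_all add: expand)
  moreover have "hpart 0 (\<Prod>j=1..Suc t. 1 + lform m (v j)) = 1"
    unfolding step IH0 hpart_0_mult_lform by simp
  moreover have "hpart 1 (\<Prod>j=1..Suc t. 1 + lform m (v j)) = lform m (\<lambda>k. \<Sum>j=1..Suc t. v j k)"
    unfolding step IH1 mult1 by (simp add: lform_add)
  ultimately show ?case
    by blast
qed

lemma mem_pspan_iff: "p \<in> pspan N f \<longleftrightarrow> (\<exists>c. p = (\<Sum>j=1..N. Const (c j) * f j))"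
  by (simp add: pspan_def)

section \<open>The Klein four-group\<close>

lemma ksum_empty [simp]: "ksum g {} = 0"
  by (simp add: ksum_def)

lemma ksum_insert: "finite U \<Longrightarrow> x \<notin> U \<Longrightarrow> ksum g (insert x U) = xor (g x) (ksum g U)"
proof -
  assume "finite U" "x \<notin> U"
  interpret comp_fun_commute "\<lambda>i a. xor (g i) (a::nat)"
    by unfold_locales (auto simp: fun_eq_iff xor.left_commute)
  show ?thesis
    using \<open>finite U\<close> \<open>x \<notin> U\<close> by (simp add: ksum_def)
qed

lemma klein_xor_hom:
  assumes "(x::nat) < 4" and "y < 4"
  shows "xor x y < 4 \<and> alphaS (xor x y) = alphaS x + alphaS y \<and> betaS (xor x y) = betaS x + betaS y"
proof -
  have "x \<in> {0, 1, 2, 3}" and "y \<in> {0, 1, 2, 3}"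
    using assms by auto
  then show ?thesis
    by (auto simp: alphaS_def betaS_def)
qed

lemma ksum_klein_hom:
  "finite U \<Longrightarrow> (\<forall>i\<in>U. g i < 4) \<Longrightarrow> ksum g U < 4
     \<and> alphaS (ksum g U) = (\<Sum>i\<in>U. alphaS (g i)) \<and> betaS (ksum g U) = (\<Sum>i\<in>U. betaS (g i))"
proof (induction U rule: finite_induct)
  case empty
  then show ?case
    by (simp add: alphaS_def betaS_def)
next
  case (insert x F)
  then show ?case
    using klein_xor_hom[of "g x" "ksum g F"] by (simp add: ksum_insert add.commute)
qed

lemma alphaS_mult_betaS: "(x::nat) < 4 \<Longrightarrow> alphaS x * betaS x = of_bool (x = 1)"
  by (auto simp: alphaS_def betaS_def)

section \<open>Distinguished matrices\<close>

context
  fixes n :: nat and A :: "nat \<Rightarrow> nat \<Rightarrow> nat"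
  assumes distinguished: "distinguished (n - 1) n A"
begin

lemma entry_cases: "i \<in> {1..n-1} \<Longrightarrow> j \<in> {1..n} \<Longrightarrow> (if i = j then A i j = 1 else A i j \<in> {2, 3})"
  using distinguished unfolding distinguished_def by blast

lemma entry_less_4: "i \<in> {1..n-1} \<Longrightarrow> j \<in> {1..n} \<Longrightarrow> A i j < 4"
  using entry_cases[of i j] by (auto split: if_splits)

lemma alphaS_mult_betaS_entry:
  "i \<in> {1..n-1} \<Longrightarrow> j \<in> {1..n} \<Longrightarrow> alphaS (A i j) * betaS (A i j) = of_bool (i = j)"
  using entry_cases[of i j] by (auto split: if_splits simp: alphaS_def betaS_def)

lemma alphaS_add_betaS_entry:
  "i \<in> {1..n-1} \<Longrightarrow> j \<in> {1..n} \<Longrightarrow> alphaS (A i j) + betaS (A i j) = of_bool (i \<noteq> j)"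
  using entry_cases[of i j] by (auto split: if_splits simp: alphaS_def betaS_def)

definition theta_cross_coeff :: "nat \<Rightarrow> nat \<Rightarrow> nat \<Rightarrow> bit" where
  "theta_cross_coeff j k l = alphaS (A k j) * betaS (A l j) + alphaS (A l j) * betaS (A k j)"

definition span_cross_coeff :: "(nat \<Rightarrow> bit) \<Rightarrow> nat \<Rightarrow> nat \<Rightarrow> bit" where
  "span_cross_coeff c k l = (\<Sum>j=1..n. c j * theta_cross_coeff j k l)"

definition theta_minus_square :: "nat \<Rightarrow> z2poly" where
  "theta_minus_square j = (if j < n then thetaA A n j - Var j ^ 2 else thetaA A n j)"

lemma thetaA_eq_lform_mult:
  "thetaA A n j = lform (n-1) (\<lambda>k. alphaS (A k j)) * lform (n-1) (\<lambda>k. betaS (A k j))"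
  by (simp add: thetaA_def alphaA_def betaA_def lform_def)

lemma thetaA_qform: "j \<in> {1..n} \<Longrightarrow> thetaA A n j = qform (n-1) (\<lambda>k. of_bool (k = j)) (theta_cross_coeff j)"
  unfolding thetaA_eq_lform_mult lform_mult_lform
  by (rule qform_cong) (simp_all add: alphaS_mult_betaS_entry theta_cross_coeff_def)

lemma theta_minus_square_qform: "j \<in> {1..n} \<Longrightarrow> theta_minus_square j = qform (n-1) (\<lambda>k. 0) (theta_cross_coeff j)"
proof -
  assume j: "j \<in> {1..n}"
  show ?thesis
  proof (cases "j < n")
    case True
    with j have j': "j \<in> {1..n-1}"
      by auto
    have "thetaA A n j = qform (n-1) (\<lambda>k. 0) (theta_cross_coeff j) + Var j ^ 2"
      unfolding thetaA_qform[OF j] Var_power2_qform[OF j'] qform_add by (rule qform_cong) simp_all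
    with True show ?thesis
      by (simp add: theta_minus_square_def)
  next
    case False
    with j have "qform (n-1) (\<lambda>k. of_bool (k = j)) (theta_cross_coeff j) = qform (n-1) (\<lambda>k. 0) (theta_cross_coeff j)"
      by (intro qform_cong) auto
    with False j show ?thesis
      by (simp add: theta_minus_square_def thetaA_qform)
  qed
qed

lemma sum_thetaA_qform: "(\<Sum>j=1..n. Const (c j) * thetaA A n j) = qform (n-1) c (span_cross_coeff c)"
proof -
  have "(\<Sum>j=1..n. Const (c j) * thetaA A n j)
      = (\<Sum>j=1..n. qform (n-1) (\<lambda>k. c j * of_bool (k = j)) (\<lambda>k l. c j * theta_cross_coeff j k l))"
    by (rule sum.cong) (simp_all add: thetaA_qform Const_mult_qform)
  also have "\<dots> = qform (n-1) c (span_cross_coeff c)"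
    unfolding sum_qform[OF finite_atLeastAtMost] span_cross_coeff_def[abs_def]
    by (rule qform_cong) (auto simp: if_distrib cong: if_cong)
  finally show ?thesis .
qed

lemma sum_theta_minus_square_qform: "(\<Sum>j=1..n. Const (c j) * theta_minus_square j) = qform (n-1) (\<lambda>k. 0) (span_cross_coeff c)"
proof -
  have "(\<Sum>j=1..n. Const (c j) * theta_minus_square j)
      = (\<Sum>j=1..n. qform (n-1) (\<lambda>k. c j * 0) (\<lambda>k l. c j * theta_cross_coeff j k l))"
    by (rule sum.cong) (simp_all add: theta_minus_square_qform Const_mult_qform)
  also have "\<dots> = qform (n-1) (\<lambda>k. 0) (span_cross_coeff c)"
    by (simp add: sum_qform span_cross_coeff_def[abs_def])
  finally show ?thesis .
qed

lemma wA_eq_prod_lform: "wA A n = (\<Prod>j=1..n. 1 + lform (n-1) (\<lambda>k. alphaS (A k j) + betaS (A k j)))"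
proof -
  have "alphaA A n j = lform (n-1) (\<lambda>k. alphaS (A k j))" and "betaA A n j = lform (n-1) (\<lambda>k. betaS (A k j))" for j
    by (simp_all add: alphaA_def betaA_def lform_def)
  then have "1 + alphaA A n j + betaA A n j = 1 + lform (n-1) (\<lambda>k. alphaS (A k j) + betaS (A k j))" for j
    by (simp add: add.assoc lform_add)
  then show ?thesis
    unfolding wA_def by (simp only:)
qed

lemma hpart2_wA_qform:
  assumes "odd n"
  shows "\<exists>s. hpart 2 (wA A n) = qform (n-1) s (\<lambda>k l. 1)"
proof -
  define v where "v = (\<lambda>j k. alphaS (A k j) + betaS (A k j))"
  text \<open>This is where n odd is used: n - 1 is even and n - 2 is odd.\<close>
  have "(\<Sum>j=1..n. v j k) * (\<Sum>j=1..n. v j l) + (\<Sum>j=1..n. v j k * v j l) = 1"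
    if kl: "(k, l) \<in> pairs {1..n-1}" for k l
  proof -
    have k: "k \<in> {1..n-1}" and l: "l \<in> {1..n-1}"
      using kl by auto
    have v_entry: "v j i = of_bool (j \<notin> {i})" if "i \<in> {1..n-1}" "j \<in> {1..n}" for i j
      using alphaS_add_betaS_entry[OF that] by (auto simp: v_def)
    have count: "(\<Sum>j\<in>{1..n}. of_bool (j \<notin> X)) = (of_nat (card ({1..n} - X)) :: bit)" for X
      by (simp add: Diff_eq Int_def)
    have column: "(\<Sum>j=1..n. v j i) = 0" if i: "i \<in> {1..n-1}" for i
    proof -
      have "(\<Sum>j=1..n. v j i) = of_nat (card ({1..n} - {i}))"
        unfolding count[symmetric] using i by (intro sum.cong) (auto simp: v_entry)
      also have "card ({1..n} - {i}) = n - 1"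
        using i by (subst card_Diff_singleton) auto
      finally show ?thesis
        using assms by (simp add: of_nat_bit)
    qed
    have "odd (n - 2)"
      using assms kl by auto
    have "(\<Sum>j=1..n. v j k * v j l) = of_nat (card ({1..n} - {k, l}))"
      unfolding count[symmetric] using k l by (intro sum.cong) (auto simp: v_entry)
    also have "card ({1..n} - {k, l}) = n - 2"
      using kl by (subst card_Diff_subset) auto
    finally show ?thesis
      using column[OF k] \<open>odd (n - 2)\<close> by (simp add: of_nat_bit)
  qed
  moreover obtain s where "hpart 2 (wA A n) = qform (n-1) s
      (\<lambda>k l. (\<Sum>j=1..n. v j k) * (\<Sum>j=1..n. v j l) + (\<Sum>j=1..n. v j k * v j l))"
    using hpart_prod_one_plus_lform[of "n-1" v n] unfolding wA_eq_prod_lform v_def by blast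
  ultimately show ?thesis
    by (metis (no_types, lifting) qform_cong)
qed

lemma qval_thetaA:
  assumes U: "U \<subseteq> {1..n-1}" and j: "j \<in> {1..n}"
  shows "qval (thetaA A n j) U = of_bool (j \<in> JA A n U)"
proof -
  have "finite U"
    using U by (rule finite_subset) simp
  moreover have "\<forall>i\<in>U. A i j < 4"
    using U j entry_less_4 by auto
  ultimately have ksum: "ksum (\<lambda>i. A i j) U < 4
      \<and> alphaS (ksum (\<lambda>i. A i j) U) = (\<Sum>i\<in>U. alphaS (A i j))
      \<and> betaS (ksum (\<lambda>i. A i j) U) = (\<Sum>i\<in>U. betaS (A i j))"
    by (rule ksum_klein_hom)
  have "qval (thetaA A n j) U = (\<Sum>k\<in>U. alphaS (A k j)) * (\<Sum>k\<in>U. betaS (A k j))"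
    unfolding thetaA_eq_lform_mult by (rule qval_lform_mult_lform[OF U])
  also have "\<dots> = alphaS (ksum (\<lambda>i. A i j) U) * betaS (ksum (\<lambda>i. A i j) U)"
    using ksum by simp
  also have "\<dots> = of_bool (ksum (\<lambda>i. A i j) U = 1)"
    using ksum alphaS_mult_betaS by blast
  finally show ?thesis
    using j by (simp add: JA_def)
qed

lemma qval_theta_minus_square:
  assumes U: "U \<subseteq> {1..n-1}" and j: "j \<in> {1..n}"
  shows "qval (theta_minus_square j) U = of_bool (j \<in> sym_diff (JA A n U) U)"
proof (cases "j < n")
  case True
  with j have j': "j \<in> {1..n-1}"
    by auto
  have "finite U"
    using U by (rule finite_subset) simp
  then have "qval (Var j ^ 2) U = of_bool (j \<in> U)"
    unfolding Var_power2_qform[OF j'] qval_qform[OF U] by simp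
  moreover have "thetaA A n j = theta_minus_square j + Var j ^ 2"
    using True by (simp add: theta_minus_square_def)
  then have "qval (theta_minus_square j) U = qval (thetaA A n j) U + qval (Var j ^ 2) U"
    by (simp add: qval_add add.assoc)
  ultimately show ?thesis
    by (auto simp: qval_thetaA[OF U j] of_bool_add_of_bool_bit)
next
  case False
  have "j \<notin> U"
  proof
    assume "j \<in> U"
    with U have "j \<le> n - 1" and "1 \<le> j"
      by auto
    with False show False
      by linarith
  qed
  with False show ?thesis
    using qval_thetaA[OF U j] by (simp add: theta_minus_square_def)
qed

lemma qval_sum_theta_minus_square:
  assumes U: "U \<subseteq> {1..n-1}"
  shows "qval (\<Sum>j=1..n. Const (c j) * theta_minus_square j) U
    = of_nat (card (sym_diff (JA A n U) U \<inter> {j\<in>{1..n}. c j = 1}))"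
proof -
  let ?D = "sym_diff (JA A n U) U"
  have "qval (\<Sum>j=1..n. Const (c j) * theta_minus_square j) U = (\<Sum>j\<in>{1..n}. c j * qval (theta_minus_square j) U)"
    by (simp add: qval_sum qval_Const_mult)
  also have "\<dots> = (\<Sum>j\<in>{1..n}. of_bool (j \<in> ?D \<inter> {j\<in>{1..n}. c j = 1}))"
    by (intro sum.cong refl) (auto simp: qval_theta_minus_square[OF U] bit_mult_of_bool)
  also have "\<dots> = of_nat (card ({1..n} \<inter> (?D \<inter> {j\<in>{1..n}. c j = 1})))"
    by (simp only: sum_of_bool_eq finite_atLeastAtMost Collect_mem_eq)
  also have "{1..n} \<inter> (?D \<inter> {j\<in>{1..n}. c j = 1}) = ?D \<inter> {j\<in>{1..n}. c j = 1}"
    by blast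
  finally show ?thesis .
qed

lemma square_plus_wA2_in_span_iff:
  assumes "odd n"
  shows "(\<exists>a. lform (n-1) a ^ 2 + hpart 2 (wA A n) \<in> pspan n (thetaA A n))
    \<longleftrightarrow> (\<exists>c. \<forall>(k, l)\<in>pairs {1..n-1}. span_cross_coeff c k l = 1)"
proof -
  obtain s where s: "hpart 2 (wA A n) = qform (n-1) s (\<lambda>k l. 1)"
    using hpart2_wA_qform[OF assms] by blast
  have "(\<exists>a. lform (n-1) a ^ 2 + hpart 2 (wA A n) \<in> pspan n (thetaA A n))
      \<longleftrightarrow> (\<exists>a c. qform (n-1) (\<lambda>k. a k + s k) (\<lambda>k l. 1) = qform (n-1) c (span_cross_coeff c))"
    unfolding mem_pspan_iff sum_thetaA_qform lform_square s qform_add by simp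
  also have "\<dots> \<longleftrightarrow> (\<exists>c. \<forall>(k, l)\<in>pairs {1..n-1}. span_cross_coeff c k l = 1)"
  proof
    assume "\<exists>c. \<forall>(k, l)\<in>pairs {1..n-1}. span_cross_coeff c k l = 1"
    then obtain c where "\<forall>(k, l)\<in>pairs {1..n-1}. span_cross_coeff c k l = 1" ..
    then have "qform (n-1) (\<lambda>k. (c k + s k) + s k) (\<lambda>k l. 1) = qform (n-1) c (span_cross_coeff c)"
      by (auto simp: qform_eq_iff add.assoc)
    then show "\<exists>a c. qform (n-1) (\<lambda>k. a k + s k) (\<lambda>k l. 1) = qform (n-1) c (span_cross_coeff c)"
      by (intro exI[where x = "\<lambda>k. c k + s k"] exI[where x = c])
  qed (auto simp: qform_eq_iff)
  finally show ?thesis .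
qed

lemma sigma2_in_span_theta_minus_square_iff:
  "sigma2 (n - 1) \<in> pspan n theta_minus_square \<longleftrightarrow> (\<exists>c. \<forall>(k, l)\<in>pairs {1..n-1}. span_cross_coeff c k l = 1)"
  unfolding mem_pspan_iff sum_theta_minus_square_qform sigma2_qform qform_eq_iff by auto

lemma sigma2_in_span_theta_minus_square_iff_parity:
  "sigma2 (n - 1) \<in> pspan n theta_minus_square \<longleftrightarrow> (\<exists>S \<subseteq> {1..n}. \<forall>U \<subseteq> {1..n-1}.
     card (sym_diff (JA A n U) U \<inter> S) mod 2 = (card U choose 2) mod 2)"
proof -
  let ?parity = "\<lambda>S. \<forall>U \<subseteq> {1..n-1}.
    card (sym_diff (JA A n U) U \<inter> S) mod 2 = (card U choose 2) mod 2"
  have "sigma2 (n - 1) \<in> pspan n theta_minus_square \<longleftrightarrow> (\<exists>c. \<forall>U \<subseteq> {1..n-1}.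
      qval (sigma2 (n - 1)) U = qval (\<Sum>j=1..n. Const (c j) * theta_minus_square j) U)"
    unfolding mem_pspan_iff sum_theta_minus_square_qform sigma2_qform qform_eq_iff_qval ..
  also have "\<dots> \<longleftrightarrow> (\<exists>c :: nat \<Rightarrow> bit. ?parity {j\<in>{1..n}. c j = 1})"
  proof (intro ex_cong1 all_cong)
    fix c :: "nat \<Rightarrow> bit" and U
    assume U: "U \<subseteq> {1..n-1}"
    show "qval (sigma2 (n - 1)) U = qval (\<Sum>j=1..n. Const (c j) * theta_minus_square j) U
      \<longleftrightarrow> card (sym_diff (JA A n U) U \<inter> {j\<in>{1..n}. c j = 1}) mod 2 = (card U choose 2) mod 2"
      unfolding qval_sigma2[OF U] qval_sum_theta_minus_square[OF U] of_nat_bit_eq_iff by (rule eq_commute)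
  qed
  also have "\<dots> \<longleftrightarrow> (\<exists>S \<subseteq> {1..n}. ?parity S)"
    by (rule ex_bit_vector_iff_ex_subset)
  finally show ?thesis .
qed

end

theorem mainTheorem7:
  fixes n :: nat and A :: "nat \<Rightarrow> nat \<Rightarrow> nat"
  assumes "n > 1" and "odd n" and "distinguished (n - 1) n A"
  shows "((\<exists>a :: nat \<Rightarrow> bit. let x = (\<Sum>k=1..n-1. Const (a k) * Var k) in
            x ^ 2 + hpart 2 (wA A n) \<in> pspan n (thetaA A n))
        \<longleftrightarrow> sigma2 (n - 1) \<in> pspan n (\<lambda>j. if j < n then thetaA A n j - Var j ^ 2 else thetaA A n j))
      \<and> (sigma2 (n - 1) \<in> pspan n (\<lambda>j. if j < n then thetaA A n j - Var j ^ 2 else thetaA A n j)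
        \<longleftrightarrow> (\<exists>S \<subseteq> {1..n}. \<forall>U \<subseteq> {1..n-1}.
               card (((JA A n U - U) \<union> (U - JA A n U)) \<inter> S) mod 2 = (card U choose 2) mod 2))"
proof -
  have red: "(\<lambda>j. if j < n then thetaA A n j - Var j ^ 2 else thetaA A n j) = theta_minus_square n A"
    by (simp add: theta_minus_square_def[OF assms(3)] fun_eq_iff)
  show ?thesis
    unfolding red Let_def lform_def[symmetric]
    using square_plus_wA2_in_span_iff[OF assms(3,2)] sigma2_in_span_theta_minus_square_iff[OF assms(3)]
      sigma2_in_span_theta_minus_square_iff_parity[OF assms(3)]
    by blast
qed

end
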